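(* Suppose $v_0=v^*$. Then for any two time steps $0\le a<b\le n$, $$\|P\widehat v_b-P\widehat v_a\|_2^2\le 50\cdot\alpha\cdot\log(\|v_b\|_2/\|v_a\|_2).$$
   Context: Setting: $\phi(x_1),\dots,\phi(x_n)\in\mathbb{R}^d$ are feature vectors of samples $x_1,\dots,x_n$; $\eta\in(0,0.1)$; $\beta\ge\alpha>0$; $v^*\in\mathbb{R}^d$ satisfies $\|v^*\|_2=1$, $\eta\sum_{i=1}^n\langle v^*,\phi(x_i)\rangle^2=\beta$, and $\eta\sum_{i=1}^n\langle w,\phi(x_i)\rangle^2\le\alpha$ for every $w$ with $\|w\|_2\le1$ and $\langle w,v^*\rangle=0$. $P=I-v^*(v^* )^\top$. The iterates are $v_i=v_{i-1}+\eta\langle\phi(x_i),v_{i-1}\rangle\phi(x_i)$ for $i\in[n]$, and $\widehat v_i=v_i/\|v_i\|_2$. $\log$ is the natural logarithm. *)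

theory Defs
  imports "HOL-Analysis.Analysis"
begin

definition proj_perp :: "'a::real_inner \<Rightarrow> 'a \<Rightarrow> 'a" where
  "proj_perp vs y = y - (vs \<bullet> y) *\<^sub>R vs"

definition unit_dir :: "'a::real_normed_vector \<Rightarrow> 'a" where
  "unit_dir y = y /\<^sub>R norm y"

end

theory Submission
  imports Defs
begin

text \<open>
  Write \<open>g\<^sub>i = \<langle>\<phi>(x\<^sub>i), v\<^sub>i\<^sub>-\<^sub>1\<rangle>\<close> and \<open>E(a,b) = \<eta> \<Sum>\<^sub>a\<^sub><\<^sub>i\<^sub>\<le>\<^sub>b g\<^sub>i\<^sup>2\<close>.
  Each update raises \<open>\<parallel>v\<parallel>\<^sup>2\<close> by at least \<open>2\<eta>g\<^sub>i\<^sup>2\<close>, so \<open>2E(a,b) \<le> \<parallel>v\<^sub>b\<parallel>\<^sup>2 - \<parallel>v\<^sub>a\<parallel>\<^sup>2\<close>.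
  On the other hand \<open>v\<^sub>b - v\<^sub>a = \<Sum> \<eta>g\<^sub>i\<phi>(x\<^sub>i)\<close>; pairing it with \<open>z = P(v\<^sub>b - v\<^sub>a)\<close>, which is
  orthogonal to \<open>v\<^sup>*\<close>, Cauchy-Schwarz and the spectral gap give \<open>\<parallel>z\<parallel>\<^sup>4 \<le> E(a,b)\<alpha>\<parallel>z\<parallel>\<^sup>2\<close>.
  Hence \<open>\<parallel>Pv\<^sub>b - Pv\<^sub>a\<parallel>\<^sup>2 \<le> \<alpha>(\<parallel>v\<^sub>b\<parallel>\<^sup>2 - \<parallel>v\<^sub>a\<parallel>\<^sup>2)/2\<close>, and also \<open>\<parallel>Pv\<^sub>a\<parallel>\<^sup>2 \<le> \<alpha>\<parallel>v\<^sub>a\<parallel>\<^sup>2/2\<close> because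
  \<open>Pv\<^sub>0 = 0\<close>. Splitting \<open>Pv\<^sub>b/R - Pv\<^sub>a/r = (Pv\<^sub>b - Pv\<^sub>a)/R + (1/R - 1/r)Pv\<^sub>a\<close> with \<open>r = \<parallel>v\<^sub>a\<parallel>\<close>,
  \<open>R = \<parallel>v\<^sub>b\<parallel>\<close> bounds the left-hand side by \<open>2\<alpha>(1 - r\<^sup>2/R\<^sup>2) \<le> 4\<alpha> ln(R/r)\<close>.
  So the constant 4 suffices, and neither \<open>\<eta> < 0.1\<close> nor anything about \<open>\<beta>\<close> is needed.
\<close>

lemma linear_proj_perp: "linear (proj_perp vs)"
  by (rule linearI) (simp_all add: proj_perp_def inner_add_right algebra_simps)

lemma proj_perp_self: "norm vs = 1 \<Longrightarrow> proj_perp vs vs = 0"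
  by (simp add: proj_perp_def dot_square_norm)

lemma proj_perp_orthogonal: "norm vs = 1 \<Longrightarrow> proj_perp vs y \<bullet> vs = 0"
  by (simp add: proj_perp_def inner_diff_left dot_square_norm inner_commute[of y vs])

lemma inner_proj_perp_right: "z \<bullet> vs = 0 \<Longrightarrow> z \<bullet> proj_perp vs y = z \<bullet> y"
  by (simp add: proj_perp_def inner_diff_right)

lemma proj_perp_unit_dir: "proj_perp vs (unit_dir y) = proj_perp vs y /\<^sub>R norm y"
  unfolding unit_dir_def by (simp add: linear_scale[OF linear_proj_perp])

lemma sum_sq_inner_le_norm_sq:
  fixes vs :: "'a::real_inner"
  assumes bound: "\<And>w. norm w \<le> 1 \<Longrightarrow> w \<bullet> vs = 0 \<Longrightarrow> c * (\<Sum>i\<in>I. (w \<bullet> u i)\<^sup>2) \<le> alpha"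
    and z: "z \<bullet> vs = 0"
  shows "c * (\<Sum>i\<in>I. (z \<bullet> u i)\<^sup>2) \<le> alpha * (norm z)\<^sup>2"
proof (cases "z = 0")
  case False
  define w where "w = z /\<^sub>R norm z"
  have "c * (\<Sum>i\<in>I. (w \<bullet> u i)\<^sup>2) \<le> alpha"
    using z False by (intro bound) (simp_all add: w_def)
  moreover have "(\<Sum>i\<in>I. (w \<bullet> u i)\<^sup>2) = (\<Sum>i\<in>I. (z \<bullet> u i)\<^sup>2) / (norm z)\<^sup>2"
    unfolding sum_divide_distrib
    by (rule sum.cong) (simp_all add: w_def power_mult_distrib power_inverse divide_inverse mult.commute)
  ultimately show ?thesis
    using False by (simp add: divide_le_eq mult.commute)
qed simp

lemma one_minus_sq_ratio_le_ln:
  fixes r R :: real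
  assumes "0 < r" "r \<le> R"
  shows "1 - (r / R)\<^sup>2 \<le> 2 * ln (R / r)"
proof -
  have "ln ((r / R)\<^sup>2) \<le> (r / R)\<^sup>2 - 1"
    using assms by (intro ln_le_minus_one) simp
  moreover have "ln ((r / R)\<^sup>2) = - 2 * ln (R / r)"
    using assms by (simp add: ln_div ln_mult power2_eq_square)
  ultimately show ?thesis by simp
qed

lemma norm_rescaled_diff_le:
  fixes p q :: "'a::real_normed_vector" and r R :: real
  assumes "0 < r" "r \<le> R"
  shows "norm (q /\<^sub>R R - p /\<^sub>R r) \<le> norm (q - p) / R + (1 / r - 1 / R) * norm p"
proof -
  have "q /\<^sub>R R - p /\<^sub>R r = (q - p) /\<^sub>R R + (1 / R - 1 / r) *\<^sub>R p"
    by (simp add: divide_inverse algebra_simps)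
  then show ?thesis
    using assms norm_triangle_ineq[of "(q - p) /\<^sub>R R" "(1 / R - 1 / r) *\<^sub>R p"]
    by (simp add: frac_le divide_inverse mult.commute)
qed

lemma norm_rescaled_diff_sq_le:
  fixes p q :: "'a::real_normed_vector" and r R :: real
  assumes r: "0 < r" "r \<le> R"
    and p: "(norm p)\<^sup>2 \<le> alpha * r\<^sup>2 / 2"
    and qp: "(norm (q - p))\<^sup>2 \<le> alpha * (R\<^sup>2 - r\<^sup>2) / 2"
  shows "(norm (q /\<^sub>R R - p /\<^sub>R r))\<^sup>2 \<le> 4 * alpha * ln (R / r)"
proof -
  define t where "t = r / R"
  define X where "X = norm (q - p) / R"
  define Y where "Y = (1 / r - 1 / R) * norm p"
  have R: "0 < R" and t: "0 < t" "t \<le> 1"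
    using r by (auto simp: t_def)
  have "0 \<le> alpha * r\<^sup>2"
    using p zero_le_power2[of "norm p"] by linarith
  then have alpha: "0 \<le> alpha"
    using r by (simp add: zero_le_mult_iff)
  have "norm (q /\<^sub>R R - p /\<^sub>R r) \<le> X + Y"
    unfolding X_def Y_def using r by (rule norm_rescaled_diff_le)
  then have "(norm (q /\<^sub>R R - p /\<^sub>R r))\<^sup>2 \<le> (X + Y)\<^sup>2"
    by (intro power_mono) auto
  also have "\<dots> \<le> 2 * X\<^sup>2 + 2 * Y\<^sup>2"
    using zero_le_power2[of "X - Y"] by (simp add: power2_eq_square algebra_simps)
  also have "\<dots> \<le> 2 * alpha * (1 - t\<^sup>2)"
  proof -
    have "X\<^sup>2 = (norm (q - p))\<^sup>2 / R\<^sup>2"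
      by (simp add: X_def power_divide)
    also have "\<dots> \<le> alpha * (R\<^sup>2 - r\<^sup>2) / 2 / R\<^sup>2"
      using qp by (intro divide_right_mono) auto
    also have "\<dots> = alpha * (1 - t\<^sup>2) / 2"
      using R by (simp add: t_def field_simps)
    finally have X2: "X\<^sup>2 \<le> alpha * (1 - t\<^sup>2) / 2" .
    have "Y\<^sup>2 = (norm p)\<^sup>2 / r\<^sup>2 * (1 - t)\<^sup>2"
      using r R by (simp add: Y_def t_def field_simps power2_eq_square)
    also have "\<dots> \<le> alpha / 2 * (1 - t)\<^sup>2"
      using p r by (intro mult_right_mono) (simp_all add: divide_le_eq field_simps)
    also have "\<dots> \<le> alpha / 2 * (1 - t\<^sup>2)"
      using t alpha by (intro mult_left_mono) (auto simp: power2_eq_square algebra_simps)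
    finally show ?thesis
      using X2 by simp
  qed
  also have "\<dots> \<le> 4 * alpha * ln (R / r)"
    using mult_left_mono[OF one_minus_sq_ratio_le_ln[OF r] alpha] by (simp add: t_def)
  finally show ?thesis .
qed

lemma sum_greaterThanAtMost_Suc:
  assumes "a \<le> m"
  shows "(\<Sum>i\<in>{a<..Suc m}. f i) = f (Suc m) + (\<Sum>i\<in>{a<..m}. f i)"
proof -
  have "{a<..Suc m} = insert (Suc m) {a<..m}"
    using assms by auto
  then show ?thesis by simp
qed

locale rank_one_iteration =
  fixes u :: "nat \<Rightarrow> 'a::real_inner" and eta :: real and n :: nat and v :: "nat \<Rightarrow> 'a"
  assumes eta_nonneg: "0 \<le> eta"
    and update: "\<And>i. i \<in> {1..n} \<Longrightarrow> v i = v (i - 1) + (eta * (u i \<bullet> v (i - 1))) *\<^sub>R u i"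
begin

definition energy :: "nat \<Rightarrow> nat \<Rightarrow> real" where
  "energy a b = (\<Sum>i\<in>{a<..b}. eta * (u i \<bullet> v (i - 1))\<^sup>2)"

lemma energy_nonneg: "0 \<le> energy a b"
  unfolding energy_def using eta_nonneg by (intro sum_nonneg) simp

lemma norm_sq_step:
  assumes "i \<in> {1..n}"
  shows "(norm (v (i - 1)))\<^sup>2 + 2 * eta * (u i \<bullet> v (i - 1))\<^sup>2 \<le> (norm (v i))\<^sup>2"
proof -
  define w where "w = v (i - 1)"
  define d where "d = (eta * (u i \<bullet> w)) *\<^sub>R u i"
  have "(norm (v i))\<^sup>2 = (norm (w + d))\<^sup>2"
    using update[OF assms] by (simp add: w_def d_def)
  also have "\<dots> = (norm w)\<^sup>2 + (norm d)\<^sup>2 + 2 * (w \<bullet> d)"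
    unfolding dot_norm[of w d] by (simp add: field_simps)
  finally have "(norm (v i))\<^sup>2 = (norm w)\<^sup>2 + (norm d)\<^sup>2 + 2 * (w \<bullet> d)" .
  moreover have "w \<bullet> d = eta * (u i \<bullet> w)\<^sup>2"
    by (simp add: d_def inner_commute power2_eq_square)
  ultimately show ?thesis
    unfolding w_def[symmetric] using zero_le_power2[of "norm d"] by linarith
qed

lemma norm_sq_growth:
  assumes "a \<le> b" "b \<le> n"
  shows "(norm (v a))\<^sup>2 + 2 * energy a b \<le> (norm (v b))\<^sup>2"
  using assms
proof (induction b rule: dec_induct)
  case (step m)
  have "(norm (v m))\<^sup>2 + 2 * eta * (u (Suc m) \<bullet> v m)\<^sup>2 \<le> (norm (v (Suc m)))\<^sup>2"
    using norm_sq_step[of "Suc m"] step by simp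
  with step show ?case
    by (simp add: energy_def sum_greaterThanAtMost_Suc)
qed (simp add: energy_def)

lemma norm_mono:
  assumes "a \<le> b" "b \<le> n"
  shows "norm (v a) \<le> norm (v b)"
proof (rule power2_le_imp_le)
  show "(norm (v a))\<^sup>2 \<le> (norm (v b))\<^sup>2"
    using norm_sq_growth[OF assms] energy_nonneg[of a b] by linarith
qed simp

lemma increment_eq_sum:
  assumes "a \<le> b" "b \<le> n"
  shows "v b - v a = (\<Sum>i\<in>{a<..b}. (eta * (u i \<bullet> v (i - 1))) *\<^sub>R u i)"
  using assms
proof (induction b rule: dec_induct)
  case (step m)
  then show ?case
    using update[of "Suc m"] by (simp add: sum_greaterThanAtMost_Suc algebra_simps)
qed simp

lemma inner_increment_sq_le:
  assumes "a \<le> b" "b \<le> n"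
  shows "(z \<bullet> (v b - v a))\<^sup>2 \<le> energy a b * (\<Sum>i\<in>{a<..b}. eta * (z \<bullet> u i)\<^sup>2)"
proof -
  define s where "s = sqrt eta"
  have s: "s * s = eta" "s\<^sup>2 = eta"
    using eta_nonneg by (simp_all add: s_def)
  have "z \<bullet> (v b - v a) = (\<Sum>i\<in>{a<..b}. (s * (u i \<bullet> v (i - 1))) * (s * (z \<bullet> u i)))"
    using increment_eq_sum[OF assms]
    by (simp add: inner_sum_right mult_ac flip: s(1))
  also have "\<dots>\<^sup>2 \<le> (\<Sum>i\<in>{a<..b}. (s * (u i \<bullet> v (i - 1)))\<^sup>2) * (\<Sum>i\<in>{a<..b}. (s * (z \<bullet> u i))\<^sup>2)"
    by (rule Cauchy_Schwarz_ineq_sum)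
  finally show ?thesis
    by (simp add: energy_def power_mult_distrib s(2))
qed

lemma proj_perp_increment_sq_le:
  assumes vs: "norm vs = 1" and alpha: "0 \<le> alpha"
    and gap: "\<And>z. z \<bullet> vs = 0 \<Longrightarrow> eta * (\<Sum>i=1..n. (z \<bullet> u i)\<^sup>2) \<le> alpha * (norm z)\<^sup>2"
    and ab: "a \<le> b" "b \<le> n"
  shows "(norm (proj_perp vs (v b) - proj_perp vs (v a)))\<^sup>2
           \<le> alpha * ((norm (v b))\<^sup>2 - (norm (v a))\<^sup>2) / 2"
proof -
  define z where "z = proj_perp vs (v b) - proj_perp vs (v a)"
  have z_orth: "z \<bullet> vs = 0"
    using proj_perp_orthogonal[OF vs] by (simp add: z_def inner_diff_left)
  have "(norm z)\<^sup>2 = z \<bullet> proj_perp vs (v b - v a)"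
    by (simp add: z_def power2_norm_eq_inner linear_diff[OF linear_proj_perp])
  also have "\<dots> = z \<bullet> (v b - v a)"
    using z_orth by (rule inner_proj_perp_right)
  finally have "((norm z)\<^sup>2)\<^sup>2 \<le> energy a b * (\<Sum>i\<in>{a<..b}. eta * (z \<bullet> u i)\<^sup>2)"
    using inner_increment_sq_le[OF ab] by simp
  also have "\<dots> \<le> energy a b * (alpha * (norm z)\<^sup>2)"
  proof (intro mult_left_mono energy_nonneg)
    have "(\<Sum>i\<in>{a<..b}. (z \<bullet> u i)\<^sup>2) \<le> (\<Sum>i=1..n. (z \<bullet> u i)\<^sup>2)"
      using ab by (intro sum_mono2) auto
    then have "eta * (\<Sum>i\<in>{a<..b}. (z \<bullet> u i)\<^sup>2) \<le> eta * (\<Sum>i=1..n. (z \<bullet> u i)\<^sup>2)"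
      using eta_nonneg by (rule mult_left_mono)
    then show "(\<Sum>i\<in>{a<..b}. eta * (z \<bullet> u i)\<^sup>2) \<le> alpha * (norm z)\<^sup>2"
      using gap[OF z_orth] by (simp add: sum_distrib_left)
  qed
  finally have "(norm z)\<^sup>2 \<le> alpha * energy a b"
    using alpha energy_nonneg[of a b]
    by (cases "z = 0") (auto simp: power2_eq_square mult_ac)
  also have "\<dots> \<le> alpha * (((norm (v b))\<^sup>2 - (norm (v a))\<^sup>2) / 2)"
    using norm_sq_growth[OF ab] alpha by (intro mult_left_mono) auto
  finally show ?thesis
    by (simp add: z_def)
qed

end

theorem lemmaC2:
  fixes phi :: "'b \<Rightarrow> 'a::euclidean_space"
    and x :: "nat \<Rightarrow> 'b"
    and n :: nat
    and eta alpha beta :: real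
    and vs :: 'a
    and v :: "nat \<Rightarrow> 'a"
    and a b :: nat
  assumes eta_pos: "0 < eta" and eta_small: "eta < 0.1"
    and alpha_pos: "0 < alpha" and alpha_le_beta: "alpha \<le> beta"
    and vs_unit: "norm vs = 1"
    and top_dir: "eta * (\<Sum>i=1..n. (vs \<bullet> phi (x i))\<^sup>2) = beta"
    and gap: "\<And>w. norm w \<le> 1 \<Longrightarrow> w \<bullet> vs = 0 \<Longrightarrow>
                eta * (\<Sum>i=1..n. (w \<bullet> phi (x i))\<^sup>2) \<le> alpha"
    and v_step: "\<And>i. i \<in> {1..n} \<Longrightarrow>
                v i = v (i - 1) + (eta * (phi (x i) \<bullet> v (i - 1))) *\<^sub>R phi (x i)"
    and v0: "v 0 = vs"
    and ab: "a < b" and bn: "b \<le> n"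
  shows "(norm (proj_perp vs (unit_dir (v b)) - proj_perp vs (unit_dir (v a))))\<^sup>2
           \<le> 50 * alpha * ln (norm (v b) / norm (v a))"
proof -
  interpret rank_one_iteration "\<lambda>i. phi (x i)" eta n v
    using eta_pos v_step by unfold_locales auto
  have gap_scaled: "eta * (\<Sum>i=1..n. (z \<bullet> phi (x i))\<^sup>2) \<le> alpha * (norm z)\<^sup>2"
    if "z \<bullet> vs = 0" for z
    using gap that by (rule sum_sq_inner_le_norm_sq)
  have increment_bound: "(norm (proj_perp vs (v j) - proj_perp vs (v i)))\<^sup>2
      \<le> alpha * ((norm (v j))\<^sup>2 - (norm (v i))\<^sup>2) / 2" if "i \<le> j" "j \<le> n" for i j
    using proj_perp_increment_sq_le[OF vs_unit _ gap_scaled that] alpha_pos by simp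
  have r: "1 \<le> norm (v a)" "norm (v a) \<le> norm (v b)"
    using norm_mono[of 0 a] norm_mono[of a b] ab bn v0 vs_unit by auto
  have "(norm (proj_perp vs (v a)))\<^sup>2 \<le> alpha * ((norm (v a))\<^sup>2 - 1) / 2"
    using increment_bound[of 0 a] ab bn v0 vs_unit proj_perp_self[OF vs_unit] by simp
  also have "\<dots> \<le> alpha * (norm (v a))\<^sup>2 / 2"
    using alpha_pos by (simp add: right_diff_distrib diff_divide_distrib)
  finally have "(norm (proj_perp vs (unit_dir (v b)) - proj_perp vs (unit_dir (v a))))\<^sup>2
      \<le> 4 * alpha * ln (norm (v b) / norm (v a))"
    unfolding proj_perp_unit_dir using r increment_bound[of a b] ab bn
    by (intro norm_rescaled_diff_sq_le) auto
  also have "\<dots> \<le> 50 * alpha * ln (norm (v b) / norm (v a))"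
    using r alpha_pos by (intro mult_right_mono ln_ge_zero) (auto simp: le_divide_eq)
  finally show ?thesis .
qed

end
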